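(* Let $f\in\mathcal{E}$ have infinite order and suppose $d(f^n)$ is bounded independently of $n$. Then there exists $N\in\mathbb{N}$ such that $d(f^{nN})$ is the same for all $n\in\mathbb{N}$.
   Context: Identify $\mathbb{T}^1=\mathbb{R}/\mathbb{Z}$ with $[0,1)$. An interval exchange transformation is a bijection of $\mathbb{T}^1$ that is a translation on each piece of some partition of $[0,1)$ into finitely many half-open intervals $[a,b)$; $\mathcal{E}$ is the group of these. $d(g)$ is the number of points at which $g$ is discontinuous as a map of the circle $\mathbb{T}^1$ with its standard topology. *)

theory Defs
  imports "HOL-Analysis.Analysis"
begin

text \<open>T^1 = R/Z is identified with [0,1). An interval exchange transformation is
  a bijection of [0,1) which is a translation on each piece of a finite partition of
  [0,1) into half-open intervals [a,b). Values of g outside [0,1) are irrelevant.\<close>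

definition iet :: "(real \<Rightarrow> real) \<Rightarrow> bool" where
  "iet g \<longleftrightarrow> bij_betw g {0..<1} {0..<1} \<and>
     (\<exists>P. finite P \<and> pairwise disjnt P \<and> \<Union>P = {0..<1} \<and>
          (\<forall>I\<in>P. \<exists>a b. 0 \<le> a \<and> a < b \<and> b \<le> 1 \<and> I = {a..<b}) \<and>
          (\<forall>I\<in>P. \<exists>c. \<forall>x\<in>I. g x = x + c))"

text \<open>Continuity of g at the point [x] of the circle: the lift
  t \<mapsto> exp(2 pi i g(frac t)) of g, composed with the covering maps, is continuous at x.\<close>

definition circle_cont_at :: "(real \<Rightarrow> real) \<Rightarrow> real \<Rightarrow> bool" where
  "circle_cont_at g x \<longleftrightarrow> isCont (\<lambda>t. cis (2 * pi * g (frac t))) x"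

definition disc_count :: "(real \<Rightarrow> real) \<Rightarrow> nat" where
  "disc_count g = card {x \<in> {0..<1}. \<not> circle_cont_at g x}"

definition infinite_order :: "(real \<Rightarrow> real) \<Rightarrow> bool" where
  "infinite_order f \<longleftrightarrow> (\<forall>n::nat. n \<ge> 1 \<longrightarrow> (\<exists>x\<in>{0..<1}. (f ^^ n) x \<noteq> x))"

end

theory Submission
  imports Defs
begin

text \<open>On the circle, f^n is continuous at x exactly when its left limit (f^n)(x-) equals its
  value. The map L x = f(x-) is again a self-map of [0,1) differing from f at finitely many
  points, and (f^n)(x-) = L^n x, so d(f^n) counts the points where L^n and f^n disagree.
  Charging each such point to the first point of disagreement of L and f on its f-orbit writes
  d(f^n) as a finite sum of counts, each of which is eventually periodic in n once it is
  bounded. Hence n \<mapsto> d(f^n) is eventually periodic, and it is constant along the multiples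
  of any sufficiently large multiple of its period.\<close>

section \<open>Eventually periodic sequences\<close>

definition eventually_periodic :: "(nat \<Rightarrow> 'a) \<Rightarrow> bool" where
  "eventually_periodic s \<longleftrightarrow> (\<exists>M p. 0 < p \<and> (\<forall>m\<ge>M. s (m + p) = s m))"

lemma eventually_periodicI:
  "0 < p \<Longrightarrow> (\<And>m. M \<le> m \<Longrightarrow> s (m + p) = s m) \<Longrightarrow> eventually_periodic s"
  unfolding eventually_periodic_def by blast

lemma periodic_add_mult:
  fixes k :: nat
  assumes per: "\<forall>m\<ge>M. s (m + p) = s m" and "M \<le> m"
  shows "s (m + k * p) = s m"
proof (induction k)
  case (Suc k)
  have "s (m + k * p + p) = s (m + k * p)" using per \<open>M \<le> m\<close> by simp
  then show ?case using Suc by (simp add: algebra_simps)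
qed simp

lemma eventually_periodic_if_eventually_const:
  "(\<And>m. M \<le> m \<Longrightarrow> s (Suc m) = s m) \<Longrightarrow> eventually_periodic s"
  by (rule eventually_periodicI[of 1]) simp_all

lemma eventually_periodic_map2:
  assumes "eventually_periodic s" "eventually_periodic t"
  shows "eventually_periodic (\<lambda>m. h (s m) (t m))"
proof -
  obtain M1 p1 where p1: "0 < p1" "\<forall>m\<ge>M1. s (m + p1) = s m"
    using assms(1) unfolding eventually_periodic_def by blast
  obtain M2 p2 where p2: "0 < p2" "\<forall>m\<ge>M2. t (m + p2) = t m"
    using assms(2) unfolding eventually_periodic_def by blast
  show ?thesis
  proof (rule eventually_periodicI[of "p2 * p1" "max M1 M2"])
    fix m assume "max M1 M2 \<le> m"
    then have "s (m + p2 * p1) = s m" "t (m + p1 * p2) = t m"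
      using periodic_add_mult[OF p1(2)] periodic_add_mult[OF p2(2)] by simp_all
    then show "h (s (m + p2 * p1)) (t (m + p2 * p1)) = h (s m) (t m)"
      by (simp add: mult.commute)
  qed (use p1 p2 in simp)
qed

lemma eventually_periodic_sum:
  assumes "finite D" "\<And>z. z \<in> D \<Longrightarrow> eventually_periodic (f z)"
  shows "eventually_periodic (\<lambda>m. \<Sum>z\<in>D. f z m :: 'b :: comm_monoid_add)"
  using assms
proof (induction D rule: finite_induct)
  case empty
  show ?case by (rule eventually_periodicI[of 1]) simp_all
next
  case (insert x F)
  then have "eventually_periodic (\<lambda>m. f x m + (\<Sum>z\<in>F. f z m))"
    using eventually_periodic_map2[of "f x" "\<lambda>m. \<Sum>z\<in>F. f z m" "(+)"] by simp
  then show ?case using insert by simp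
qed

lemma eventually_periodic_finite_range:
  assumes "eventually_periodic s"
  shows "finite (range s)"
proof -
  obtain M p where p: "0 < p" "\<forall>m\<ge>M. s (m + p) = s m"
    using assms unfolding eventually_periodic_def by blast
  have "s j \<in> s ` {..<M + p}" for j
  proof (cases "j < M + p")
    case False
    define r where "r = M + (j - M) mod p"
    have "j = r + (j - M) div p * p" using False by (simp add: r_def)
    moreover have "s (r + (j - M) div p * p) = s r"
      by (rule periodic_add_mult[OF p(2)]) (simp add: r_def)
    ultimately have "s j = s r" by simp
    moreover have "r < M + p" using p(1) by (simp add: r_def)
    ultimately show ?thesis by simp
  qed simp
  then have "range s \<subseteq> s ` {..<M + p}" by blast
  then show ?thesis by (rule finite_subset) simp
qed

lemma eventually_periodic_multiples:
  assumes "eventually_periodic s"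
  shows "\<exists>N\<ge>1. \<forall>n\<ge>1. s (n * N) = s N"
proof -
  obtain M p where p: "0 < p" "\<forall>m\<ge>M. s (m + p) = s m"
    using assms unfolding eventually_periodic_def by blast
  define N where "N = p * (M + 1)"
  have "1 * (M + 1) \<le> N" unfolding N_def using p(1) by (intro mult_le_mono1) simp
  then have "M \<le> N" by simp
  moreover have "n * N = N + (n - 1) * (M + 1) * p" if "n \<ge> 1" for n
  proof -
    have "n * N = (1 + (n - 1)) * N" using that by simp
    then show ?thesis by (simp only: N_def algebra_simps)
  qed
  ultimately have "s (n * N) = s N" if "n \<ge> 1" for n
    using that periodic_add_mult[OF p(2)] by metis
  moreover have "N \<ge> 1" using p(1) by (simp add: N_def)
  ultimately show ?thesis by blast
qed

lemma mono_bounded_nat_seq_eventually_const: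
  fixes s :: "nat \<Rightarrow> nat"
  assumes "\<And>m. s m \<le> s (Suc m)" and "\<And>m. s m \<le> B"
  shows "\<exists>M. \<forall>m\<ge>M. s (Suc m) = s m"
proof -
  have fin: "finite (range s)" using assms(2) by (meson finite_atMost finite_subset image_subsetI atMost_iff)
  obtain M where M: "s M = Max (range s)" using Max_in[OF fin] by auto
  have "s m = s M" if "M \<le> m" for m
    using lift_Suc_mono_le[of s, OF assms(1) that] Max_ge[OF fin, of "s m"] M by simp
  then show ?thesis by (metis le_Suc_eq)
qed

section \<open>Iterates of two maps that differ at finitely many points\<close>

lemma funpow_closed: "F ` S \<subseteq> S \<Longrightarrow> x \<in> S \<Longrightarrow> (F ^^ n) x \<in> S"
  by (induction n) auto

lemma inj_on_funpow: "inj_on F S \<Longrightarrow> F ` S \<subseteq> S \<Longrightarrow> inj_on (F ^^ n) S"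
proof (induction n)
  case (Suc n)
  then have "inj_on (F ^^ n \<circ> F) S" by (intro comp_inj_on) (auto intro: inj_on_subset)
  then show ?case by (simp only: funpow_Suc_right)
qed simp

lemma funpow_split_apply:
  fixes k m :: nat and F :: "'a \<Rightarrow> 'a"
  shows "k \<le> m \<Longrightarrow> (F ^^ m) x = (F ^^ (m - k)) ((F ^^ k) x)"
  by (metis funpow_add comp_apply le_add_diff_inverse2)

lemma funpow_eq_if_agree_on_orbit:
  "(\<And>i. i < k \<Longrightarrow> L ((R ^^ i) x) = R ((R ^^ i) x)) \<Longrightarrow> (L ^^ k) x = (R ^^ k) x"
  by (induction k) auto

lemma orbit_eventually_periodic:
  fixes F :: "'a \<Rightarrow> 'a"
  assumes "\<not> inj (\<lambda>j. (F ^^ j) z)"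
  shows "eventually_periodic (\<lambda>j. (F ^^ j) z)"
proof -
  obtain a b where ab: "a < b" "(F ^^ a) z = (F ^^ b) z"
  proof -
    obtain i j where ij: "i \<noteq> j" "(F ^^ i) z = (F ^^ j) z" using assms unfolding inj_def by blast
    then consider "i < j" | "j < i" by linarith
    then show thesis using that ij(2) by cases auto
  qed
  show ?thesis
  proof (rule eventually_periodicI[of "b - a" a])
    fix m assume "a \<le> m"
    have "(F ^^ (m + (b - a))) z = (F ^^ (m - a)) ((F ^^ b) z)"
      using funpow_split_apply[of b "m + (b - a)" F z] \<open>a \<le> m\<close> ab(1) by simp
    also have "\<dots> = (F ^^ m) z"
      using funpow_split_apply[of a m F z] \<open>a \<le> m\<close> ab(2) by simp
    finally show "(F ^^ (m + (b - a))) z = (F ^^ m) z" .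
  qed (use ab in simp)
qed

lemma inj_eventually_avoids:
  fixes s :: "nat \<Rightarrow> 'a"
  assumes "inj s" "finite V"
  shows "\<exists>J. \<forall>j\<ge>J. s j \<notin> V"
proof -
  have "finite (s -` V)" using assms(2,1) by (rule finite_vimageI)
  then obtain J where J: "\<forall>j\<in>s -` V. j < J" using finite_nat_set_iff_bounded by blast
  have "s j \<notin> V" if "J \<le> j" for j using J that by (meson leD vimageI)
  then show ?thesis by blast
qed

text \<open>Three cases: the L-orbit of z eventually avoids the finite set where L and R differ,
  after which both orbits move by the injective R; or it is eventually periodic while the
  R-orbit eventually leaves every finite set; or both orbits are eventually periodic.\<close>
lemma mismatch_eventually_periodic:
  assumes LS: "L ` S \<subseteq> S" and RS: "R ` S \<subseteq> S" and inj: "inj_on R S"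
    and fin: "finite {y\<in>S. L y \<noteq> R y}" and z: "z \<in> S"
  shows "eventually_periodic (\<lambda>j. (L ^^ j) z \<noteq> (R ^^ j) z)"
proof -
  consider "inj (\<lambda>j. (L ^^ j) z)"
    | "\<not> inj (\<lambda>j. (L ^^ j) z)" "inj (\<lambda>j. (R ^^ j) z)"
    | "\<not> inj (\<lambda>j. (L ^^ j) z)" "\<not> inj (\<lambda>j. (R ^^ j) z)"
    by blast
  then show ?thesis
  proof cases
    case 1
    then obtain J where J: "\<forall>j\<ge>J. (L ^^ j) z \<notin> {y\<in>S. L y \<noteq> R y}"
      using fin inj_eventually_avoids by blast
    show ?thesis
    proof (rule eventually_periodic_if_eventually_const)
      fix m assume "J \<le> m"
      then have "(L ^^ Suc m) z = R ((L ^^ m) z)"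
        using J funpow_closed[OF LS z] by auto
      moreover have "(R ^^ Suc m) z = R ((R ^^ m) z)" by simp
      ultimately show "((L ^^ Suc m) z \<noteq> (R ^^ Suc m) z) = ((L ^^ m) z \<noteq> (R ^^ m) z)"
        using inj_on_eq_iff[OF inj funpow_closed[OF LS z] funpow_closed[OF RS z]] by simp
    qed
  next
    case 2
    have "finite (range (\<lambda>j. (L ^^ j) z))"
      using 2(1) by (intro eventually_periodic_finite_range orbit_eventually_periodic)
    with 2(2) obtain J where "\<forall>j\<ge>J. (R ^^ j) z \<notin> range (\<lambda>j. (L ^^ j) z)"
      using inj_eventually_avoids by blast
    then have "(L ^^ m) z \<noteq> (R ^^ m) z" if "J \<le> m" for m
      using that by (metis rangeI)
    then show ?thesis
      by (intro eventually_periodic_if_eventually_const[of J]) (simp only: le_SucI)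
  next
    case 3
    then show ?thesis
      using eventually_periodic_map2[of "\<lambda>j. (L ^^ j) z" "\<lambda>j. (R ^^ j) z" "(\<noteq>)"]
      by (simp add: orbit_eventually_periodic)
  qed
qed

definition entry_times :: "('a \<Rightarrow> 'a) \<Rightarrow> 'a set \<Rightarrow> 'a set \<Rightarrow> 'a \<Rightarrow> nat set" where
  "entry_times R S D z = {k. \<exists>x\<in>S. (R ^^ k) x = z \<and> (\<forall>i<k. (R ^^ i) x \<notin> D)}"

lemma entry_times_downward_closed:
  assumes RS: "R ` S \<subseteq> S" and k: "k \<in> entry_times R S D z" and "k' \<le> k"
  shows "k' \<in> entry_times R S D z"
proof -
  obtain x where x: "x \<in> S" "(R ^^ k) x = z" "\<forall>i<k. (R ^^ i) x \<notin> D"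
    using k unfolding entry_times_def by blast
  define x' where "x' = (R ^^ (k - k')) x"
  have "(R ^^ i) x' = (R ^^ (i + (k - k'))) x" for i
    by (simp add: x'_def funpow_add)
  then have "(R ^^ k') x' = z" "\<forall>i<k'. (R ^^ i) x' \<notin> D"
    using x(2,3) \<open>k' \<le> k\<close> by auto
  moreover have "x' \<in> S" unfolding x'_def using RS x(1) by (rule funpow_closed)
  ultimately show ?thesis unfolding entry_times_def by blast
qed

lemma funpow_mismatch_iff_first_entry:
  assumes D: "D = {y\<in>S. L y \<noteq> R y}" and RS: "R ` S \<subseteq> S" and x: "x \<in> S"
  shows "(L ^^ m) x \<noteq> (R ^^ m) x \<longleftrightarrow>
    (\<exists>k<m. (R ^^ k) x \<in> D \<and> (\<forall>i<k. (R ^^ i) x \<notin> D) \<and>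
       (L ^^ (m - k)) ((R ^^ k) x) \<noteq> (R ^^ (m - k)) ((R ^^ k) x))"
proof -
  have agree: "(L ^^ k) x = (R ^^ k) x" if "\<forall>i<k. (R ^^ i) x \<notin> D" for k
    using that funpow_closed[OF RS x] by (intro funpow_eq_if_agree_on_orbit) (auto simp: D)
  show ?thesis
  proof
    assume mis: "(L ^^ m) x \<noteq> (R ^^ m) x"
    then obtain k0 where k0: "k0 < m" "(R ^^ k0) x \<in> D"
      using agree[of m] by blast
    then obtain k where k: "(R ^^ k) x \<in> D" "\<forall>i<k. (R ^^ i) x \<notin> D"
      using exists_least_iff[of "\<lambda>k. (R ^^ k) x \<in> D"] by blast
    then have "k < m" using k0 by (meson leI order.strict_trans1)
    moreover have "(L ^^ m) x = (L ^^ (m - k)) ((R ^^ k) x)"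
      using funpow_split_apply[of k m L x] agree[OF k(2)] \<open>k < m\<close> by simp
    moreover have "(R ^^ m) x = (R ^^ (m - k)) ((R ^^ k) x)"
      using funpow_split_apply[of k m R x] \<open>k < m\<close> by simp
    ultimately show "\<exists>k<m. (R ^^ k) x \<in> D \<and> (\<forall>i<k. (R ^^ i) x \<notin> D) \<and>
       (L ^^ (m - k)) ((R ^^ k) x) \<noteq> (R ^^ (m - k)) ((R ^^ k) x)"
      using k mis by auto
  next
    assume "\<exists>k<m. (R ^^ k) x \<in> D \<and> (\<forall>i<k. (R ^^ i) x \<notin> D) \<and>
       (L ^^ (m - k)) ((R ^^ k) x) \<noteq> (R ^^ (m - k)) ((R ^^ k) x)"
    then obtain k where "k < m" "\<forall>i<k. (R ^^ i) x \<notin> D"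
      "(L ^^ (m - k)) ((R ^^ k) x) \<noteq> (R ^^ (m - k)) ((R ^^ k) x)"
      by blast
    then show "(L ^^ m) x \<noteq> (R ^^ m) x"
      using agree funpow_split_apply[of k m L x] funpow_split_apply[of k m R x] by simp
  qed
qed

text \<open>Each point where the iterates disagree is charged to the first point of D on its
  R-orbit, together with the time it takes to get there.\<close>
lemma card_mismatch_eq_sum_entry_times:
  assumes D: "D = {y\<in>S. L y \<noteq> R y}" and fin: "finite D"
    and RS: "R ` S \<subseteq> S" and inj: "inj_on R S"
  shows "card {x\<in>S. (L ^^ m) x \<noteq> (R ^^ m) x} =
    (\<Sum>z\<in>D. card {k\<in>entry_times R S D z. k < m \<and> (L ^^ (m - k)) z \<noteq> (R ^^ (m - k)) z})"
    (is "card ?A = (\<Sum>z\<in>D. card (?K z))")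
proof -
  define entry where "entry x = (LEAST k. (R ^^ k) x \<in> D)" for x
  define h where "h x = ((R ^^ entry x) x, entry x)" for x
  have entry_eq: "entry x = k" if "(R ^^ k) x \<in> D" "\<forall>i<k. (R ^^ i) x \<notin> D" for x k
    unfolding entry_def using that by (intro Least_equality) (auto simp: not_less[symmetric])
  have "bij_betw h ?A (Sigma D ?K)"
  proof (rule bij_betw_imageI)
    show "inj_on h ?A"
      using inj_on_funpow[OF inj RS] by (auto simp: inj_on_def h_def)
    show "h ` ?A = Sigma D ?K"
    proof (intro equalityI subsetI)
      fix y assume "y \<in> h ` ?A"
      then obtain x where x: "x \<in> S" "(L ^^ m) x \<noteq> (R ^^ m) x" and y: "y = h x" by blast
      then obtain k where
        "k < m" "(R ^^ k) x \<in> D" "\<forall>i<k. (R ^^ i) x \<notin> D"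
        "(L ^^ (m - k)) ((R ^^ k) x) \<noteq> (R ^^ (m - k)) ((R ^^ k) x)"
        using funpow_mismatch_iff_first_entry[OF D RS x(1)] by blast
      with x(1) show "y \<in> Sigma D ?K"
        by (auto simp: y h_def entry_eq entry_times_def)
    next
      fix y assume "y \<in> Sigma D ?K"
      then obtain z k where y: "y = (z, k)" and "z \<in> D" "k \<in> ?K z" by blast
      then obtain x where x: "x \<in> S" "(R ^^ k) x = z" "\<forall>i<k. (R ^^ i) x \<notin> D"
        and "k < m" "(L ^^ (m - k)) z \<noteq> (R ^^ (m - k)) z"
        unfolding entry_times_def by blast
      moreover have "entry x = k" using x \<open>z \<in> D\<close> by (intro entry_eq) auto
      ultimately show "y \<in> h ` ?A"
        using funpow_mismatch_iff_first_entry[OF D RS x(1), of m] \<open>z \<in> D\<close>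
        by (intro image_eqI[of _ _ x]) (auto simp: y h_def)
    qed
  qed
  then have "card ?A = card (Sigma D ?K)" by (rule bij_betw_same_card)
  also have "\<dots> = (\<Sum>z\<in>D. card (?K z))"
    using fin by (intro card_SigmaI) (auto intro: finite_subset[of _ "{..<m}"])
  finally show ?thesis .
qed

text \<open>A downward closed E is finite or all of nat. If it is finite, the count only sees the
  values of e at times m - k with k bounded, which are eventually periodic; otherwise the count
  is monotone in m, hence eventually constant.\<close>
lemma eventually_periodic_card_delays:
  fixes E :: "nat set" and e :: "nat \<Rightarrow> bool"
  assumes down: "\<And>k k'. k \<in> E \<Longrightarrow> k' \<le> k \<Longrightarrow> k' \<in> E"
    and per: "eventually_periodic e"
    and bd: "\<And>m. card {k\<in>E. k < m \<and> e (m - k)} \<le> B"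
  shows "eventually_periodic (\<lambda>m. card {k\<in>E. k < m \<and> e (m - k)})"
proof (cases "finite E")
  case True
  then obtain \<beta> where \<beta>: "\<forall>k\<in>E. k < \<beta>" using finite_nat_set_iff_bounded by blast
  obtain M p where p: "0 < p" "\<forall>m\<ge>M. e (m + p) = e m"
    using per unfolding eventually_periodic_def by blast
  show ?thesis
  proof (rule eventually_periodicI[OF p(1), of "\<beta> + M"])
    fix m assume m: "\<beta> + M \<le> m"
    have "e (m + p - k) = e (m - k)" if "k \<in> E" for k
    proof -
      have "m + p - k = (m - k) + p" "M \<le> m - k" using \<beta> that m by auto
      then show ?thesis using p(2) by simp
    qed
    then have "{k\<in>E. k < m + p \<and> e (m + p - k)} = {k\<in>E. k < m \<and> e (m - k)}"
      using \<beta> m by force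
    then show "card {k\<in>E. k < m + p \<and> e (m + p - k)} = card {k\<in>E. k < m \<and> e (m - k)}"
      by simp
  qed
next
  case False
  then have "E = UNIV" using down by (metis UNIV_eq_I finite_nat_set_iff_bounded not_le)
  have "card {k\<in>E. k < m \<and> e (m - k)} \<le> card {k\<in>E. k < Suc m \<and> e (Suc m - k)}" for m
    by (rule card_inj_on_le[of Suc]) (auto simp: \<open>E = UNIV\<close>)
  then obtain M where "\<forall>m\<ge>M. card {k\<in>E. k < Suc m \<and> e (Suc m - k)} = card {k\<in>E. k < m \<and> e (m - k)}"
    using mono_bounded_nat_seq_eventually_const[of "\<lambda>m. card {k\<in>E. k < m \<and> e (m - k)}", OF _ bd]
    by blast
  then show ?thesis by (intro eventually_periodic_if_eventually_const[of M]) simp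
qed

lemma card_mismatch_eventually_periodic:
  assumes LS: "L ` S \<subseteq> S" and RS: "R ` S \<subseteq> S" and inj: "inj_on R S"
    and fin: "finite {y\<in>S. L y \<noteq> R y}"
    and bd: "\<And>n. card {x\<in>S. (L ^^ n) x \<noteq> (R ^^ n) x} \<le> B"
  shows "eventually_periodic (\<lambda>n. card {x\<in>S. (L ^^ n) x \<noteq> (R ^^ n) x})"
proof -
  define D where "D = {y\<in>S. L y \<noteq> R y}"
  define c where "c z m = card {k\<in>entry_times R S D z. k < m \<and> (L ^^ (m - k)) z \<noteq> (R ^^ (m - k)) z}"
    for z m
  have finD: "finite D" using fin by (simp add: D_def)
  have sum: "card {x\<in>S. (L ^^ m) x \<noteq> (R ^^ m) x} = (\<Sum>z\<in>D. c z m)" for m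
    unfolding c_def by (rule card_mismatch_eq_sum_entry_times[OF D_def finD RS inj])
  have per: "eventually_periodic (c z)" if "z \<in> D" for z
    unfolding c_def
  proof (rule eventually_periodic_card_delays)
    show "eventually_periodic (\<lambda>j. (L ^^ j) z \<noteq> (R ^^ j) z)"
      using that D_def by (intro mismatch_eventually_periodic[OF LS RS inj fin]) auto
    show "card {k\<in>entry_times R S D z. k < m \<and> (L ^^ (m - k)) z \<noteq> (R ^^ (m - k)) z} \<le> B" for m
      using member_le_sum[of z D "\<lambda>z. c z m"] that finD bd[of m] unfolding sum c_def by simp
  qed (rule entry_times_downward_closed[OF RS])
  show ?thesis
    unfolding sum using finD per by (rule eventually_periodic_sum)
qed

section \<open>One-sided germs on the circle\<close>

text \<open>germ_left g x y: on a short arc of the circle ending at x, g is the rotation taking x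
  to y, so y is the left limit of g at x; germ_right is the same on an arc starting at x.\<close>

definition germ_left :: "(real \<Rightarrow> real) \<Rightarrow> real \<Rightarrow> real \<Rightarrow> bool" where
  "germ_left g x y \<longleftrightarrow> (\<exists>e>0. \<forall>s. 0 < s \<and> s < e \<longrightarrow> g (frac (x - s)) = frac (y - s))"

definition germ_right :: "(real \<Rightarrow> real) \<Rightarrow> real \<Rightarrow> real \<Rightarrow> bool" where
  "germ_right g x y \<longleftrightarrow> (\<exists>e>0. \<forall>s. 0 \<le> s \<and> s < e \<longrightarrow> g (frac (x + s)) = frac (y + s))"

lemma germ_left_comp:
  assumes "germ_left g x y" "germ_left h y w"
  shows "germ_left (h \<circ> g) x w"
proof -
  obtain e1 where "e1 > 0" "\<forall>s. 0 < s \<and> s < e1 \<longrightarrow> g (frac (x - s)) = frac (y - s)"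
    using assms(1) germ_left_def by blast
  moreover obtain e2 where "e2 > 0" "\<forall>s. 0 < s \<and> s < e2 \<longrightarrow> h (frac (y - s)) = frac (w - s)"
    using assms(2) germ_left_def by blast
  ultimately show ?thesis unfolding germ_left_def by (intro exI[of _ "min e1 e2"]) auto
qed

lemma germ_right_comp:
  assumes "germ_right g x y" "germ_right h y w"
  shows "germ_right (h \<circ> g) x w"
proof -
  obtain e1 where "e1 > 0" "\<forall>s. 0 \<le> s \<and> s < e1 \<longrightarrow> g (frac (x + s)) = frac (y + s)"
    using assms(1) germ_right_def by blast
  moreover obtain e2 where "e2 > 0" "\<forall>s. 0 \<le> s \<and> s < e2 \<longrightarrow> h (frac (y + s)) = frac (w + s)"
    using assms(2) germ_right_def by blast
  ultimately show ?thesis unfolding germ_right_def by (intro exI[of _ "min e1 e2"]) auto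
qed

lemma germ_left_funpow:
  assumes "\<forall>x\<in>S. L x \<in> S \<and> germ_left f x (L x)" "x \<in> S"
  shows "germ_left (f ^^ n) x ((L ^^ n) x)"
  using assms(2)
proof (induction n arbitrary: x)
  case 0
  show ?case unfolding germ_left_def by (intro exI[of _ 1]) simp
next
  case (Suc n)
  then have "germ_left (f ^^ n \<circ> f) x ((L ^^ n) (L x))"
    using assms(1) germ_left_comp by blast
  then show ?case by (metis funpow_Suc_right comp_apply)
qed

lemma germ_right_funpow:
  assumes "\<forall>x\<in>S. R x \<in> S \<and> germ_right f x (R x)" "x \<in> S"
  shows "germ_right (f ^^ n) x ((R ^^ n) x)"
  using assms(2)
proof (induction n arbitrary: x)
  case 0
  show ?case unfolding germ_right_def by (intro exI[of _ 1]) simp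
next
  case (Suc n)
  then have "germ_right (f ^^ n \<circ> f) x ((R ^^ n) (R x))"
    using assms(1) germ_right_comp by blast
  then show ?case by (metis funpow_Suc_right comp_apply)
qed

lemma germ_left_unique:
  assumes "germ_left g x y" "germ_left g x y'" "y \<in> {0..<1}" "y' \<in> {0..<1}"
  shows "y = y'"
proof -
  obtain e1 where e1: "e1 > 0" "\<forall>s. 0 < s \<and> s < e1 \<longrightarrow> g (frac (x - s)) = frac (y - s)"
    using assms(1) germ_left_def by blast
  obtain e2 where e2: "e2 > 0" "\<forall>s. 0 < s \<and> s < e2 \<longrightarrow> g (frac (x - s)) = frac (y' - s)"
    using assms(2) germ_left_def by blast
  define s where "s = min e1 e2 / 2"
  have "0 < s" "s < e1" "s < e2" using e1(1) e2(1) by (auto simp: s_def)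
  then have "frac (y - s) = frac (y' - s)" using e1(2) e2(2) by metis
  then obtain n :: int where "y - s = y' - s + n" by (rule frac_eqE)
  moreover have "-1 < y - y'" "y - y' < 1" using assms(3,4) by auto
  ultimately have "n = 0" by linarith
  with \<open>y - s = y' - s + n\<close> show ?thesis by simp
qed

lemma cis_2pi_frac: "cis (2 * pi * frac u) = cis (2 * pi * u)"
proof -
  have "cis (2 * pi * frac u) = cis (2 * pi * u) / cis (2 * pi * of_int \<lfloor>u\<rfloor>)"
    by (simp add: frac_def algebra_simps flip: cis_divide)
  then show ?thesis by simp
qed

lemma cis_2pi_inj_on: "inj_on (\<lambda>a. cis (2 * pi * a)) {0..<1}"
proof (rule inj_onI)
  fix a b :: real assume ab: "a \<in> {0..<1}" "b \<in> {0..<1}" "cis (2 * pi * a) = cis (2 * pi * b)"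
  then have "cis (2 * pi * (a - b)) = 1" by (simp add: cis_divide[symmetric] algebra_simps)
  then have "cos (2 * pi * (a - b)) = 1" by (metis cis.sel(1) one_complex.sel(1))
  then obtain n :: int where "2 * pi * (a - b) = of_int n * 2 * pi" unfolding cos_one_2pi_int by blast
  then have "a - b = n" by simp
  moreover have "-1 < a - b" "a - b < 1" using ab by auto
  ultimately have "n = 0" by linarith
  with \<open>a - b = n\<close> show "a = b" by simp
qed

lemma circle_cont_at_iff_germs:
  assumes y: "y \<in> {0..<1}" and w: "w \<in> {0..<1}"
    and left: "germ_left g x y" and right: "germ_right g x w"
  shows "circle_cont_at g x \<longleftrightarrow> y = w"
proof -
  define \<phi> where "\<phi> t = cis (2 * pi * g (frac t))" for t
  obtain e1 where e1: "e1 > 0" "\<forall>s. 0 < s \<and> s < e1 \<longrightarrow> g (frac (x - s)) = frac (y - s)"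
    using left germ_left_def by blast
  obtain e2 where e2: "e2 > 0" "\<forall>s. 0 \<le> s \<and> s < e2 \<longrightarrow> g (frac (x + s)) = frac (w + s)"
    using right germ_right_def by blast
  have \<phi>_left: "\<phi> t = cis (2 * pi * (y - (x - t)))" if "x - e1 < t" "t < x" for t
    using e1(2)[rule_format, of "x - t"] that by (simp add: \<phi>_def cis_2pi_frac)
  have \<phi>_right: "\<phi> t = cis (2 * pi * (w + (t - x)))" if "x \<le> t" "t < x + e2" for t
    using e2(2)[rule_format, of "t - x"] that by (simp add: \<phi>_def cis_2pi_frac)
  show ?thesis
  proof
    assume "circle_cont_at g x"
    then have lim_x: "(\<phi> \<longlongrightarrow> \<phi> x) (at_left x)"
      unfolding circle_cont_at_def \<phi>_def isCont_def by (rule tendsto_within_subset) simp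
    have "((\<lambda>t. cis (2 * pi * (y - (x - t)))) \<longlongrightarrow> cis (2 * pi * y)) (at_left x)"
      by (auto intro!: tendsto_eq_intros)
    moreover have "eventually (\<lambda>t. cis (2 * pi * (y - (x - t))) = \<phi> t) (at_left x)"
      using eventually_at_left_real[of "x - e1" x] e1(1) by (auto elim: eventually_mono simp: \<phi>_left)
    ultimately have lim_y: "(\<phi> \<longlongrightarrow> cis (2 * pi * y)) (at_left x)"
      by (rule Lim_transform_eventually)
    have "cis (2 * pi * y) = \<phi> x"
      using tendsto_unique[OF trivial_limit_at_left_real lim_y lim_x] .
    also have "\<dots> = cis (2 * pi * w)" using \<phi>_right[of x] e2(1) by simp
    finally show "y = w" using inj_onD[OF cis_2pi_inj_on _ y w] by simp
  next
    assume "y = w"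
    have "\<phi> t = cis (2 * pi * (w + (t - x)))" if "dist t x < min e1 e2" for t
      using that \<phi>_left \<phi>_right \<open>y = w\<close> by (cases "t < x") (auto simp: dist_real_def algebra_simps)
    then have "eventually (\<lambda>t. cis (2 * pi * (w + (t - x))) = \<phi> t) (nhds x)"
      unfolding eventually_nhds_metric using e1(1) e2(1) by (metis min_less_iff_conj)
    moreover have "isCont (\<lambda>t. cis (2 * pi * (w + (t - x)))) x"
      unfolding isCont_def by (intro tendsto_intros)
    ultimately have "isCont \<phi> x" by (simp add: isCont_cong)
    then show "circle_cont_at g x" unfolding circle_cont_at_def \<phi>_def .
  qed
qed

lemma germ_right_translation:
  assumes "{a..<b} \<subseteq> {0..<1}" "\<forall>t\<in>{a..<b}. f t = t + c \<and> f t \<in> {0..<1}"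
    and "a \<le> x" "x < b"
  shows "germ_right f x (f x)"
  unfolding germ_right_def
proof (intro exI[of _ "b - x"] conjI allI impI)
  fix s assume "0 \<le> s \<and> s < b - x"
  then have xs: "x + s \<in> {a..<b}" and x: "x \<in> {a..<b}" using assms(3,4) by auto
  have "f (x + s) = f x + s" using assms(2) xs x by simp
  moreover have "f (x + s) \<in> {0..<1}" using assms(2) xs by blast
  ultimately have "frac (f x + s) = f (x + s)" by (metis frac_eq_id)
  moreover have "x + s \<in> {0..<1}" using xs assms(1) by blast
  ultimately show "f (frac (x + s)) = frac (f x + s)" by simp
qed (use assms in simp)

lemma germ_left_translation:
  assumes "{a..<b} \<subseteq> {0..<1}" "\<forall>t\<in>{a..<b}. f t = t + c \<and> f t \<in> {0..<1}"
    and "a < u" "u \<le> b" "x - u \<in> \<int>"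
  shows "germ_left f x (frac (u + c))"
  unfolding germ_left_def
proof (intro exI[of _ "u - a"] conjI allI impI)
  fix s assume "0 < s \<and> s < u - a"
  then have us: "u - s \<in> {a..<b}" using assms(4) by auto
  then have "u - s \<in> {0..<1}" using assms(1) by blast
  moreover have "(x - s) - (u - s) \<in> \<int>" using assms(5) by simp
  ultimately have x: "frac (x - s) = u - s" by (simp add: frac_unique_iff)
  have "frac (u + c) - s = (u - s + c) + of_int (- \<lfloor>u + c\<rfloor>)"
    by (simp add: frac_def)
  then have "frac (frac (u + c) - s) = frac (u - s + c)"
    by (simp only: frac_add_of_int_right)
  also have "\<dots> = f (u - s)" using assms(2)[rule_format, OF us] by (metis frac_eq_id)
  finally show "f (frac (x - s)) = frac (frac (u + c) - s)" using x by simp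
qed (use assms in simp)

lemma partition_piece_below:
  assumes "finite P" "\<Union>P = {0..<1::real}" "\<forall>I\<in>P. \<exists>a b. a < b \<and> I = {a..<b}"
    and "0 < u" "u \<le> 1"
  shows "\<exists>a b. {a..<b} \<in> P \<and> a < u \<and> u \<le> b"
proof -
  define Q where "Q = {I\<in>P. Inf I < u}"
  have finQ: "finite (Sup ` Q)" using assms(1) by (simp add: Q_def)
  have "0 \<in> \<Union>P" using assms(2) by simp
  then obtain I0 a0 b0 where "I0 \<in> P" "0 \<in> I0" "a0 < b0" "I0 = {a0..<b0}"
    using assms(3) by blast
  moreover have "a0 \<in> \<Union>P" using calculation by auto
  ultimately have "I0 \<in> Q" using assms(2,4) by (auto simp: Q_def)
  then have "Max (Sup ` Q) \<in> Sup ` Q" using finQ by (intro Max_in) auto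
  then obtain I where I: "I \<in> Q" "Sup I = Max (Sup ` Q)" by auto
  then obtain a b where ab: "{a..<b} \<in> P" "a < b" "I = {a..<b}" "a < u"
    using assms(3) by (auto simp: Q_def)
  show ?thesis
  proof (cases "u \<le> b")
    case False
    have "a \<in> \<Union>P" using ab(1,2) by (intro UnionI[of "{a..<b}"]) auto
    then have "b \<in> \<Union>P" using False ab(2) assms(2,5) by auto
    then obtain J a' b' where J: "J \<in> P" "b \<in> J" "a' < b'" "J = {a'..<b'}"
      using assms(3) by blast
    then have "J \<in> Q" using False by (auto simp: Q_def)
    then have "Sup J \<le> Sup I" unfolding I(2) using finQ by (intro Max_ge) auto
    then show ?thesis using J ab(2,3) by simp
  qed (use ab in blast)
qed

section \<open>Interval exchange transformations\<close>

lemma iet_bij_betw: "iet f \<Longrightarrow> bij_betw f {0..<1} {0..<1}"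
  by (simp add: iet_def)

lemma iet_pieces:
  assumes "iet f"
  obtains P where "finite P" "\<Union>P = {0..<1}" "\<forall>I\<in>P. \<exists>a b. a < b \<and> I = {a..<b}"
    "\<forall>I\<in>P. \<exists>c. \<forall>t\<in>I. f t = t + c \<and> f t \<in> {0..<1}"
proof -
  have f: "bij_betw f {0..<1} {0..<1}" using assms by (rule iet_bij_betw)
  obtain P where P: "finite P" "pairwise disjnt P" "\<Union>P = {0..<1}"
    "\<forall>I\<in>P. \<exists>a b. 0 \<le> a \<and> a < b \<and> b \<le> 1 \<and> I = {a..<b}"
    and tr: "\<forall>I\<in>P. \<exists>c. \<forall>x\<in>I. f x = x + c"
    using assms unfolding iet_def by (elim conjE exE)
  have pieces: "\<forall>I\<in>P. \<exists>a b. a < b \<and> I = {a..<b}" using P(4) by meson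
  have "\<forall>I\<in>P. \<exists>c. \<forall>t\<in>I. f t = t + c \<and> f t \<in> {0..<1}"
  proof
    fix I assume I: "I \<in> P"
    obtain c where c: "\<forall>t\<in>I. f t = t + c" using bspec[OF tr I] by (rule exE)
    have "I \<subseteq> {0..<1}" using Union_upper[OF I] P(3) by simp
    then have "\<forall>t\<in>I. f t \<in> {0..<1}" using bij_betwE[OF f] by auto
    with c show "\<exists>c. \<forall>t\<in>I. f t = t + c \<and> f t \<in> {0..<1}" by (intro exI[of _ c]) simp
  qed
  with P(1,3) pieces show ?thesis by (rule that)
qed

lemma iet_germ_right:
  assumes "iet f" "x \<in> {0..<1}"
  shows "germ_right f x (f x)"
proof -
  obtain P where P: "\<Union>P = {0..<1}" "\<forall>I\<in>P. \<exists>a b. a < b \<and> I = {a..<b}"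
    "\<forall>I\<in>P. \<exists>c. \<forall>t\<in>I. f t = t + c \<and> f t \<in> {0..<1}"
    using assms(1) by (rule iet_pieces)
  have "x \<in> \<Union>P" using P(1) assms(2) by simp
  then obtain I where I: "I \<in> P" "x \<in> I" by blast
  obtain a b where ab: "I = {a..<b}" using P(2) I(1) by blast
  obtain c where "\<forall>t\<in>{a..<b}. f t = t + c \<and> f t \<in> {0..<1}" using P(3) I(1) unfolding ab by blast
  moreover have "{a..<b} \<subseteq> {0..<1}" using Union_upper[OF I(1)] P(1) ab by simp
  ultimately show ?thesis using I(2) ab by (intro germ_right_translation[of a b]) auto
qed

lemma iet_germ_left_cofinite:
  assumes "iet f"
  shows "\<exists>E. finite E \<and> (\<forall>x\<in>{0..<1} - E. germ_left f x (f x))"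
proof -
  obtain P where P: "finite P" "\<Union>P = {0..<1}" "\<forall>I\<in>P. \<exists>a b. a < b \<and> I = {a..<b}"
    "\<forall>I\<in>P. \<exists>c. \<forall>t\<in>I. f t = t + c \<and> f t \<in> {0..<1}"
    using assms by (rule iet_pieces)
  have "germ_left f x (f x)" if x: "x \<in> {0..<1}" "x \<notin> Inf ` P" for x
  proof -
    have "x \<in> \<Union>P" using P(2) x(1) by simp
    then obtain I where I: "I \<in> P" "x \<in> I" by blast
    obtain a b where ab: "a < b" "I = {a..<b}" using P(3) I(1) by blast
    obtain c where c: "\<forall>t\<in>{a..<b}. f t = t + c \<and> f t \<in> {0..<1}"
      using P(4) I(1) unfolding ab(2) by blast
    have "a \<noteq> x" using x(2) I(1) ab by force
    then have "a < x" using I(2) ab(2) by simp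
    moreover have "{a..<b} \<subseteq> {0..<1}" using Union_upper[OF I(1)] P(2) ab(2) by simp
    ultimately have "germ_left f x (frac (x + c))"
      using I(2) ab c by (intro germ_left_translation[of a b]) auto
    moreover have "f x = x + c \<and> f x \<in> {0..<1}" using c I(2) ab(2) by blast
    then have "frac (x + c) = f x" by (metis frac_eq_id)
    ultimately show ?thesis by simp
  qed
  then show ?thesis using P(1) by blast
qed

lemma iet_germ_left_exists:
  assumes "iet f" "x \<in> {0..<1}"
  shows "\<exists>y\<in>{0..<1}. germ_left f x y"
proof -
  obtain P where P: "finite P" "\<Union>P = {0..<1}" "\<forall>I\<in>P. \<exists>a b. a < b \<and> I = {a..<b}"
    "\<forall>I\<in>P. \<exists>c. \<forall>t\<in>I. f t = t + c \<and> f t \<in> {0..<1}"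
    using assms(1) by (rule iet_pieces)
  define u where "u = (if x = 0 then 1 else x)"
  have "0 < u" "u \<le> 1" "x - u \<in> \<int>" using assms(2) by (auto simp: u_def)
  moreover obtain a b where ab: "{a..<b} \<in> P" "a < u" "u \<le> b"
    using partition_piece_below[OF P(1-3) \<open>0 < u\<close> \<open>u \<le> 1\<close>] by blast
  moreover obtain c where "\<forall>t\<in>{a..<b}. f t = t + c \<and> f t \<in> {0..<1}"
    using P(4) ab(1) by blast
  moreover have "{a..<b} \<subseteq> {0..<1}" using Union_upper[OF ab(1)] P(2) by simp
  ultimately have "germ_left f x (frac (u + c))"
    by (intro germ_left_translation[of a b]) auto
  then show ?thesis by (auto simp: frac_lt_1)
qed

lemma iet_left_limit_map:
  assumes "iet f"
  obtains L where "\<forall>x\<in>{0..<1}. L x \<in> {0..<1} \<and> germ_left f x (L x)"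
    "finite {y\<in>{0..<1}. L y \<noteq> f y}"
proof -
  define L where "L x = (SOME y. y \<in> {0..<1} \<and> germ_left f x y)" for x
  have L: "\<forall>x\<in>{0..<1}. L x \<in> {0..<1} \<and> germ_left f x (L x)"
  proof
    fix x :: real assume "x \<in> {0..<1}"
    then have "\<exists>y. y \<in> {0..<1} \<and> germ_left f x y" using iet_germ_left_exists[OF assms] by blast
    then show "L x \<in> {0..<1} \<and> germ_left f x (L x)" unfolding L_def by (rule someI_ex)
  qed
  obtain E where E: "finite E" "\<forall>x\<in>{0..<1} - E. germ_left f x (f x)"
    using iet_germ_left_cofinite[OF assms] by blast
  have f: "f y \<in> {0..<1}" if "y \<in> {0..<1}" for y
    using bij_betwE[OF iet_bij_betw[OF assms]] that by blast
  have "L y = f y" if "y \<in> {0..<1} - E" for y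
    using germ_left_unique[of f y "L y" "f y"] L E(2) f that by blast
  then have "{y\<in>{0..<1}. L y \<noteq> f y} \<subseteq> E" by blast
  with L E(1) show ?thesis using that finite_subset by blast
qed

lemma disc_count_iet_funpow:
  assumes "iet f" and L: "\<forall>x\<in>{0..<1}. L x \<in> {0..<1} \<and> germ_left f x (L x)"
  shows "disc_count (f ^^ n) = card {x\<in>{0..<1}. (L ^^ n) x \<noteq> (f ^^ n) x}"
proof -
  have f: "\<forall>x\<in>{0..<1}. f x \<in> {0..<1} \<and> germ_right f x (f x)"
    using bij_betwE[OF iet_bij_betw[OF assms(1)]] iet_germ_right[OF assms(1)] by blast
  have "circle_cont_at (f ^^ n) x \<longleftrightarrow> (L ^^ n) x = (f ^^ n) x" if x: "x \<in> {0..<1}" for x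
  proof (rule circle_cont_at_iff_germs)
    show "(L ^^ n) x \<in> {0..<1}" using L x by (intro funpow_closed) auto
    show "(f ^^ n) x \<in> {0..<1}" using f x by (intro funpow_closed) auto
    show "germ_left (f ^^ n) x ((L ^^ n) x)" using L x by (rule germ_left_funpow)
    show "germ_right (f ^^ n) x ((f ^^ n) x)" using f x by (rule germ_right_funpow)
  qed
  then have "{x\<in>{0..<1}. \<not> circle_cont_at (f ^^ n) x} = {x\<in>{0..<1}. (L ^^ n) x \<noteq> (f ^^ n) x}"
    by blast
  then show ?thesis unfolding disc_count_def by simp
qed

theorem lemma3p3:
  fixes f :: "real \<Rightarrow> real"
  assumes "iet f"
    and "infinite_order f"
    and "\<exists>B. \<forall>n::nat. disc_count (f ^^ n) \<le> B"
  shows "\<exists>N::nat. N \<ge> 1 \<and> (\<forall>n m::nat. n \<ge> 1 \<longrightarrow> m \<ge> 1 \<longrightarrow>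
           disc_count (f ^^ (n * N)) = disc_count (f ^^ (m * N)))"
proof -
  obtain L where L: "\<forall>x\<in>{0..<1}. L x \<in> {0..<1} \<and> germ_left f x (L x)"
    and fin: "finite {y\<in>{0..<1}. L y \<noteq> f y}"
    using assms(1) by (rule iet_left_limit_map)
  have f: "bij_betw f {0..<1} {0..<1}" using assms(1) by (rule iet_bij_betw)
  have count: "disc_count (f ^^ n) = card {x\<in>{0..<1}. (L ^^ n) x \<noteq> (f ^^ n) x}" for n
    using assms(1) L by (rule disc_count_iet_funpow)
  obtain B where "\<forall>n. disc_count (f ^^ n) \<le> B" using assms(3) by blast
  then have "eventually_periodic (\<lambda>n. disc_count (f ^^ n))"
    unfolding count using L fin f
    by (intro card_mismatch_eventually_periodic[of L "{0..<1}" f B]) (auto simp: count bij_betw_def)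
  then obtain N where "N \<ge> 1" "\<forall>n\<ge>1. disc_count (f ^^ (n * N)) = disc_count (f ^^ N)"
    using eventually_periodic_multiples by blast
  then show ?thesis by (intro exI[of _ N]) simp
qed

end
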